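(* Let $N\ge1$, $(T_N)_{jk}=\binom{j+k}{j}$, $(\Psi_N)_{jk}=\binom{j}{k}$ for $0\le j,k<N$, and $\Lambda_N=\mathrm{diag}(1,-1,\dots,(-1)^{N-1})$. If $\vec v$ is an eigenvector of $T_N$ with eigenvalue $\lambda$, then $\Psi_N\Lambda_N\vec v$ is an eigenvector of $T_N$ with eigenvalue $\lambda^{-1}$.
   Context: Matrix indices start at $0$. ($T_N=\Psi_N\Psi_N^\intercal$ is positive definite, so $\lambda\neq0$.) *)

theory Defs
  imports "Jordan_Normal_Form.Char_Poly"
begin

definition T_mat :: "nat \<Rightarrow> real mat" where
  "T_mat N = mat N N (\<lambda>(j,k). real ((j + k) choose j))"

definition Psi_mat :: "nat \<Rightarrow> real mat" where
  "Psi_mat N = mat N N (\<lambda>(j,k). real (j choose k))"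

definition Lambda_mat :: "nat \<Rightarrow> real mat" where
  "Lambda_mat N = mat N N (\<lambda>(j,k). if j = k then (-1) ^ j else 0)"

end

theory Submission imports Defs begin

text \<open>
  Pascal's matrix factors as \<open>T = \<Psi> \<Psi>\<^sup>T\<close> (Vandermonde), and the binomial inversion formula
  says \<open>\<Psi> \<Lambda> \<Psi> = \<Lambda>\<close>. Hence \<open>P = \<Psi> \<Lambda>\<close> is an involution with \<open>T P T = P\<close>, i.e.
  \<open>P T P = T\<^sup>-\<^sup>1\<close>; so \<open>P\<close> maps eigenvectors of \<open>T\<close> for \<open>\<lambda>\<close> to eigenvectors for \<open>\<lambda>\<^sup>-\<^sup>1\<close>.
\<close>

lemma sum_choose_mult_choose:
  assumes "j < n"
  shows "(\<Sum>i<n. (j choose i) * (k choose i)) = (j + k) choose j"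
proof -
  have "(\<Sum>i<n. (j choose i) * (k choose i)) = (\<Sum>i\<le>j. (k choose i) * (j choose (j - i)))"
    using assms by (intro sum.mono_neutral_cong_right) (auto simp: binomial_symmetric[symmetric])
  also have "\<dots> = (k + j) choose j"
    by (rule vandermonde)
  finally show ?thesis
    by (simp add: add.commute)
qed

lemma sum_alternating_choose_mult_choose:
  assumes "j < n"
  shows "(\<Sum>i<n. of_nat (j choose i) * (-1) ^ i * of_nat (i choose k))
       = (if j = k then (-1) ^ k else (0 :: 'a :: comm_ring_1))"
proof (cases "k \<le> j")
  case False
  have "(j choose i) * (i choose k) = 0" for i
    using False by (cases "i \<le> j") auto
  then have "of_nat (j choose i) * (-1) ^ i * of_nat (i choose k) = (0 :: 'a)" for i
    by (metis mult.commute mult.left_commute mult_zero_right of_nat_0 of_nat_mult)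
  then show ?thesis
    using False by simp
next
  case True
  have "(\<Sum>i<n. of_nat (j choose i) * (-1) ^ i * of_nat (i choose k))
      = (\<Sum>l\<le>j - k. of_nat (j choose (l + k)) * (-1) ^ (l + k) * of_nat ((l + k) choose k) :: 'a)"
  proof -
    have "(\<Sum>i<n. of_nat (j choose i) * (-1) ^ i * of_nat (i choose k))
        = (\<Sum>i\<in>{k..j}. of_nat (j choose i) * (-1) ^ i * of_nat (i choose k) :: 'a)"
      using assms by (intro sum.mono_neutral_right) (auto simp: not_le binomial_eq_0)
    also have "\<dots> = (\<Sum>l\<in>{0..j - k}. of_nat (j choose (l + k)) * (-1) ^ (l + k) * of_nat ((l + k) choose k))"
      using True sum.shift_bounds_cl_nat_ivl[of _ 0 k "j - k"] by simp
    finally show ?thesis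
      by (simp add: atLeast0AtMost)
  qed
  also have "\<dots> = of_nat (j choose k) * (-1) ^ k * (\<Sum>l\<le>j - k. (-1) ^ l * of_nat ((j - k) choose l))"
  proof -
    have "of_nat (j choose (l + k)) * (-1) ^ (l + k) * of_nat ((l + k) choose k)
        = of_nat (j choose k) * (-1) ^ k * ((-1) ^ l * of_nat ((j - k) choose l) :: 'a)"
      if "l \<le> j - k" for l
    proof -
      have "(j choose (l + k)) * ((l + k) choose k) = (j choose k) * ((j - k) choose l)"
        using choose_mult[of k "l + k" j] that True by simp
      then have "of_nat (j choose (l + k)) * of_nat ((l + k) choose k)
          = (of_nat (j choose k) * of_nat ((j - k) choose l) :: 'a)"
        by (simp flip: of_nat_mult)
      then show ?thesis
        by (simp add: power_add mult_ac)
    qed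
    then show ?thesis
      unfolding sum_distrib_left by (intro sum.cong) auto
  qed
  also have "\<dots> = (if j = k then (-1) ^ k else 0)"
    using True choose_alternating_sum[of "j - k", where 'a = 'a] by auto
  finally show ?thesis .
qed

lemma
  fixes S L :: "'a :: comm_ring_1 mat"
  assumes S: "S \<in> carrier_mat n n" and L: "L \<in> carrier_mat n n"
    and SLS: "S * L * S = L"
  shows mult_self_if_conj_fixed: "(S * L) * (S * L) = L * L"
    and gram_mult_gram_if_conj_fixed:
      "transpose_mat L = L \<Longrightarrow> (S * transpose_mat S) * (S * L) * (S * transpose_mat S) = S * L"
proof -
  show "(S * L) * (S * L) = L * L"
    using S L SLS by (metis assoc_mult_mat mult_carrier_mat)
  assume LT: "transpose_mat L = L"
  have St: "transpose_mat S \<in> carrier_mat n n"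
    using S by simp
  have "transpose_mat (S * L * S) = transpose_mat S * L * transpose_mat S"
    using S L LT by (simp add: transpose_mult[of _ n n _ n])
  then have SLS_transpose: "transpose_mat S * L * transpose_mat S = L"
    using SLS LT by simp
  have "(S * transpose_mat S) * (S * L) * (S * transpose_mat S)
      = S * (transpose_mat S * ((S * L * S) * transpose_mat S))"
    using S L St by (simp add: assoc_mult_mat[where n\<^sub>1=n and n\<^sub>2=n and n\<^sub>3=n and n\<^sub>4=n])
  also have "\<dots> = S * L"
    using SLS SLS_transpose S L St by (simp add: assoc_mult_mat[where n\<^sub>1=n and n\<^sub>2=n and n\<^sub>3=n and n\<^sub>4=n])
  finally show "(S * transpose_mat S) * (S * L) * (S * transpose_mat S) = S * L" .
qed

lemma T_mat_carrier: "T_mat N \<in> carrier_mat N N"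
  and Psi_mat_carrier: "Psi_mat N \<in> carrier_mat N N"
  and Lambda_mat_carrier: "Lambda_mat N \<in> carrier_mat N N"
  by (auto simp: T_mat_def Psi_mat_def Lambda_mat_def)

lemma T_mat_eq_Psi_mat_transpose: "T_mat N = Psi_mat N * transpose_mat (Psi_mat N)"
proof (rule eq_matI)
  fix j k
  assume "j < dim_row (Psi_mat N * transpose_mat (Psi_mat N))"
    and "k < dim_col (Psi_mat N * transpose_mat (Psi_mat N))"
  then have j: "j < N" and k: "k < N"
    by (auto simp: Psi_mat_def)
  have "(Psi_mat N * transpose_mat (Psi_mat N)) $$ (j, k) = real (\<Sum>i<N. (j choose i) * (k choose i))"
    using j k by (simp add: Psi_mat_def scalar_prod_def atLeast0LessThan)
  then show "T_mat N $$ (j, k) = (Psi_mat N * transpose_mat (Psi_mat N)) $$ (j, k)"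
    using j k by (simp add: T_mat_def sum_choose_mult_choose)
qed (auto simp: T_mat_def Psi_mat_def)

lemma Psi_mat_mult_Lambda_mat: "Psi_mat N * Lambda_mat N = mat N N (\<lambda>(j, k). real (j choose k) * (-1) ^ k)"
  by (rule eq_matI)
     (auto simp: Psi_mat_def Lambda_mat_def scalar_prod_def if_distrib[of "(*) _"] sum.delta cong: if_cong)

lemma Psi_Lambda_Psi_mat: "Psi_mat N * Lambda_mat N * Psi_mat N = Lambda_mat N"
proof (rule eq_matI)
  fix j k
  assume "j < dim_row (Lambda_mat N)" and "k < dim_col (Lambda_mat N)"
  then have j: "j < N" and k: "k < N"
    by (auto simp: Lambda_mat_def)
  have "(Psi_mat N * Lambda_mat N * Psi_mat N) $$ (j, k)
      = (\<Sum>i<N. real (j choose i) * (-1) ^ i * real (i choose k))"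
    unfolding Psi_mat_mult_Lambda_mat using j k by (simp add: Psi_mat_def scalar_prod_def atLeast0LessThan)
  then show "(Psi_mat N * Lambda_mat N * Psi_mat N) $$ (j, k) = Lambda_mat N $$ (j, k)"
    using j k by (simp add: Lambda_mat_def sum_alternating_choose_mult_choose)
qed (auto simp: Psi_mat_def Lambda_mat_def)

lemma Lambda_mat_mult_Lambda_mat: "Lambda_mat N * Lambda_mat N = 1\<^sub>m N"
  by (rule eq_matI)
     (auto simp: Lambda_mat_def scalar_prod_def if_distrib[of "(*) _"] sum.delta
        simp flip: power_mult_distrib cong: if_cong)

lemma transpose_Lambda_mat: "transpose_mat (Lambda_mat N) = Lambda_mat N"
  by (rule eq_matI) (auto simp: Lambda_mat_def)

text \<open>\<open>P\<^sup>2 = 1\<close> gives \<open>P v \<noteq> 0\<close>, which by \<open>A P A = P\<close> also rules out \<open>\<lambda> = 0\<close>.\<close>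

lemma eigenvector_inverse_if_involution_conj:
  fixes A P :: "'a :: field mat"
  assumes A: "A \<in> carrier_mat n n" and P: "P \<in> carrier_mat n n"
    and PP: "P * P = 1\<^sub>m n" and APA: "A * P * A = P"
    and ev: "eigenvector A v lam"
  shows "eigenvector A (P *\<^sub>v v) (inverse lam)"
proof -
  from ev A have v: "v \<in> carrier_vec n" and v0: "v \<noteq> 0\<^sub>v n" and Av: "A *\<^sub>v v = lam \<cdot>\<^sub>v v"
    by (auto simp: eigenvector_def)
  have PPv: "P *\<^sub>v (P *\<^sub>v v) = v"
    using PP P v by (metis assoc_mult_mat_vec one_mult_mat_vec)
  have APAv: "A *\<^sub>v (P *\<^sub>v (A *\<^sub>v v)) = P *\<^sub>v v"
    using APA A P v by (metis assoc_mult_mat_vec mult_carrier_mat mult_mat_vec_carrier)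
  have Pv0: "P *\<^sub>v v \<noteq> 0\<^sub>v n"
  proof
    assume "P *\<^sub>v v = 0\<^sub>v n"
    then have "v = 0\<^sub>v n"
      using PPv P by auto
    with v0 show False ..
  qed
  have lam0: "lam \<noteq> 0"
  proof
    assume "lam = 0"
    then have "A *\<^sub>v v = 0\<^sub>v n"
      using Av v by auto
    moreover have "B *\<^sub>v 0\<^sub>v n = 0\<^sub>v n" if "B \<in> carrier_mat n n" for B :: "'a mat"
      using that by auto
    ultimately have "P *\<^sub>v v = 0\<^sub>v n"
      using APAv A P by metis
    with Pv0 show False ..
  qed
  have "A *\<^sub>v (P *\<^sub>v v) = A *\<^sub>v (P *\<^sub>v (inverse lam \<cdot>\<^sub>v (A *\<^sub>v v)))"
    using Av lam0 v by (simp add: smult_smult_assoc)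
  also have "\<dots> = inverse lam \<cdot>\<^sub>v (P *\<^sub>v v)"
    using A P v APAv by (simp add: mult_mat_vec)
  finally show ?thesis
    using Pv0 P v A by (simp add: eigenvector_def)
qed

theorem mainTheorem11:
  fixes N :: nat and v :: "real vec" and lam :: real
  assumes "N \<ge> 1"
    and "eigenvector (T_mat N) v lam"
  shows "eigenvector (T_mat N) ((Psi_mat N * Lambda_mat N) *\<^sub>v v) (inverse lam)"
proof (rule eigenvector_inverse_if_involution_conj[OF T_mat_carrier _ _ _ assms(2)])
  show "Psi_mat N * Lambda_mat N \<in> carrier_mat N N"
    by (rule mult_carrier_mat[OF Psi_mat_carrier Lambda_mat_carrier])
  show "(Psi_mat N * Lambda_mat N) * (Psi_mat N * Lambda_mat N) = 1\<^sub>m N"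
    using mult_self_if_conj_fixed[OF Psi_mat_carrier Lambda_mat_carrier Psi_Lambda_Psi_mat]
    by (simp add: Lambda_mat_mult_Lambda_mat)
  show "T_mat N * (Psi_mat N * Lambda_mat N) * T_mat N = Psi_mat N * Lambda_mat N"
    using gram_mult_gram_if_conj_fixed[OF Psi_mat_carrier Lambda_mat_carrier Psi_Lambda_Psi_mat
        transpose_Lambda_mat]
    by (simp add: T_mat_eq_Psi_mat_transpose)
qed

end
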